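(* In the setting described in the context, $$\mathbb{E}[V]=\mathbb{E}\left[v(I\setminus S_{\varepsilon^{-1}})\right]\ \ge\ \left(\varepsilon-\varepsilon^{3/2}\right)\cdot\sum_{j=1}^{\varepsilon^{-1}-\varepsilon^{-1/2}}\frac{\mathbb{E}[v(x^j)]}{1-(j-1)\varepsilon}.$$
   Context: A CMK instance is $\mathcal{I}=(I,w,v,m,k)$ with $I$ a finite item set, $w:I\to[0,1]$, $v:I\to\mathbb{R}_{\ge0}$, $m,k\in\mathbb{N}_{>0}$. A configuration is $C\subseteq I$ with $|C|\le k$ and $\sum_{i\in C}w(i)\le1$; $\mathcal{C}$ is the set of configurations and $\mathcal{C}(i)=\{C\in\mathcal{C}:i\in C\}$. A solution is a tuple of $m$ configurations, with value $v$ of their union; $\mathrm{OPT}(\mathcal{I})$ is the maximum value. A fractional solution is $x\in\mathbb{R}_{\ge0}^{\mathcal{C}}$, with $\mathrm{cover}_i(x)=\sum_{C\in\mathcal{C}(i)}x_C$, $\|x\|=\sum_Cx_C$; it is feasible if $\mathrm{cover}(x)\in[0,1]^I$; for $y\in\mathbb{R}^I$, $v(y)=\sum_iy_iv(i)$, and $v(x)=v(\mathrm{cover}(x))$. For $S\subseteq I$ and $\ell\in\mathbb{N}$, $\mathrm{LP}(S,\ell)$ is: maximize $v(x)$ over feasible fractional solutions $x$ with $x_C=0$ whenever $C\not\subseteq S$, and $\|x\|=\ell$. For $\|x\|\ne0$, a random configuration $R$ is distributed by $x$ ($R\sim x$) if $\Pr(R=C)=x_C/\|x\|$. Given $\varepsilon\in(0,0.1)$,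 $\mathcal{I}$ is $\varepsilon$-simple if $m>\exp(\exp(\varepsilon^{-30}))$ and $\varepsilon m\in\mathbb{N}$. Iterative randomized rounding: let $\varepsilon\in(0,0.1)$ with $\varepsilon^{-1/2}\in\mathbb{N}$ and $\mathcal{I}$ be $\varepsilon$-simple; let $q=\varepsilon m$ and $S_0=I$. For $j=1,\dots,\varepsilon^{-1}$: let $m_j=m(1-(j-1)\varepsilon)$; let $x^j$ be a $(1-\varepsilon)$-approximate solution of $\mathrm{LP}(S_{j-1},m_j)$ (a feasible solution of value at least $(1-\varepsilon)$ times its optimum), determined by the outcomes of the samples of previous iterations; sample independently $R^j_1,\dots,R^j_q\sim x^j$; set $S_j=S_{j-1}\setminus\bigcup_{b=1}^qR^j_b$. The output value is $V=v(I\setminus S_{\varepsilon^{-1}})$, where $v(T)=\sum_{i\in T}v(i)$. *)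

theory Defs
  imports "HOL-Analysis.Analysis" "HOL-Probability.Probability"
begin

definition confs :: "'a set \<Rightarrow> ('a \<Rightarrow> real) \<Rightarrow> nat \<Rightarrow> 'a set set" where
  "confs I w k = {C. C \<subseteq> I \<and> card C \<le> k \<and> sum w C \<le> 1}"

text \<open>Fractional solutions are functions on sets, nonnegative, and zero outside the
  configurations (i.e. elements of the nonnegative orthant indexed by configurations).\<close>
definition frac_sol :: "'a set \<Rightarrow> ('a \<Rightarrow> real) \<Rightarrow> nat \<Rightarrow> ('a set \<Rightarrow> real) \<Rightarrow> bool" where
  "frac_sol I w k x \<longleftrightarrow> (\<forall>C. 0 \<le> x C) \<and> (\<forall>C. C \<notin> confs I w k \<longrightarrow> x C = 0)"

definition cover :: "'a set \<Rightarrow> ('a \<Rightarrow> real) \<Rightarrow> nat \<Rightarrow> ('a set \<Rightarrow> real) \<Rightarrow> 'a \<Rightarrow> real" where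
  "cover I w k x i = (\<Sum>C\<in>{C\<in>confs I w k. i \<in> C}. x C)"

definition fnorm :: "'a set \<Rightarrow> ('a \<Rightarrow> real) \<Rightarrow> nat \<Rightarrow> ('a set \<Rightarrow> real) \<Rightarrow> real" where
  "fnorm I w k x = (\<Sum>C\<in>confs I w k. x C)"

definition feasible :: "'a set \<Rightarrow> ('a \<Rightarrow> real) \<Rightarrow> nat \<Rightarrow> ('a set \<Rightarrow> real) \<Rightarrow> bool" where
  "feasible I w k x \<longleftrightarrow> frac_sol I w k x \<and> (\<forall>i\<in>I. cover I w k x i \<le> 1)"

definition fval :: "'a set \<Rightarrow> ('a \<Rightarrow> real) \<Rightarrow> ('a \<Rightarrow> real) \<Rightarrow> nat \<Rightarrow> ('a set \<Rightarrow> real) \<Rightarrow> real" where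
  "fval I w v k x = (\<Sum>i\<in>I. cover I w k x i * v i)"

definition LP_feas :: "'a set \<Rightarrow> ('a \<Rightarrow> real) \<Rightarrow> nat \<Rightarrow> 'a set \<Rightarrow> real \<Rightarrow> ('a set \<Rightarrow> real) set" where
  "LP_feas I w k S l = {x. feasible I w k x \<and> (\<forall>C. \<not> C \<subseteq> S \<longrightarrow> x C = 0) \<and> fnorm I w k x = l}"

definition LP_opt :: "'a set \<Rightarrow> ('a \<Rightarrow> real) \<Rightarrow> ('a \<Rightarrow> real) \<Rightarrow> nat \<Rightarrow> 'a set \<Rightarrow> real \<Rightarrow> real" where
  "LP_opt I w v k S l = Sup (fval I w v k ` LP_feas I w k S l)"

definition approx_LP :: "real \<Rightarrow> 'a set \<Rightarrow> ('a \<Rightarrow> real) \<Rightarrow> ('a \<Rightarrow> real) \<Rightarrow> nat \<Rightarrow> 'a set \<Rightarrow> real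
    \<Rightarrow> ('a set \<Rightarrow> real) \<Rightarrow> bool" where
  "approx_LP eps I w v k S l x \<longleftrightarrow>
     x \<in> LP_feas I w k S l \<and> fval I w v k x \<ge> (1 - eps) * LP_opt I w v k S l"

definition sample_conf :: "'a set \<Rightarrow> ('a \<Rightarrow> real) \<Rightarrow> nat \<Rightarrow> ('a set \<Rightarrow> real) \<Rightarrow> 'a set pmf" where
  "sample_conf I w k x =
     embed_pmf (\<lambda>C. if C \<in> confs I w k then x C / fnorm I w k x else 0)"

text \<open>Remaining item set S after a history of sampled rounds (each round a list of
  sampled configurations).\<close>
definition remaining :: "'a set \<Rightarrow> 'a set list list \<Rightarrow> 'a set" where
  "remaining I h = I - (\<Union>Rs\<in>set h. \<Union>(set Rs))"

text \<open>Distribution of the history after j rounds of iterative randomized rounding.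
  sel j h is the fractional solution x^j chosen in round j given the outcome h of the
  first j-1 rounds; in each round q configurations are sampled independently.\<close>
primrec irr_run :: "'a set \<Rightarrow> ('a \<Rightarrow> real) \<Rightarrow> nat \<Rightarrow> nat
    \<Rightarrow> (nat \<Rightarrow> 'a set list list \<Rightarrow> ('a set \<Rightarrow> real)) \<Rightarrow> nat \<Rightarrow> 'a set list list pmf" where
  "irr_run I w k q sel 0 = return_pmf []"
| "irr_run I w k q sel (Suc j) =
     bind_pmf (irr_run I w k q sel j)
       (\<lambda>h. map_pmf (\<lambda>Rs. h @ [Rs]) (replicate_pmf q (sample_conf I w k (sel (Suc j) h))))"

end

theory Submission
  imports Defs
begin

text \<open>Round \<open>j\<close> draws \<open>q = \<epsilon>m\<close> configurations from \<open>x\<^sup>j\<close>, whose norm is \<open>m a\<^sub>j\<close> with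
  \<open>a\<^sub>j = 1 - (j - 1)\<epsilon>\<close>. An item \<open>i\<close> of \<open>S\<^sub>j\<^sub>-\<^sub>1\<close> escapes all of them with probability
  \<open>(1 - c\<^sub>i/(m a\<^sub>j))\<^sup>q \<le> exp(-q c\<^sub>i/(m a\<^sub>j))\<close>, where \<open>c\<^sub>i \<le> 1\<close> is its coverage, and
  \<open>1 - exp(-s) \<ge> s (1 - s)\<close>; so the expected value collected in round \<open>j\<close> is at least
  \<open>(\<epsilon>/a\<^sub>j)(1 - \<epsilon>/a\<^sub>j) v(x\<^sup>j)\<close>. While \<open>a\<^sub>j \<ge> \<surd>\<epsilon>\<close>, i.e. for \<open>j \<le> \<epsilon>\<^sup>-\<^sup>1 - \<epsilon>\<^sup>-\<^sup>1\<^sup>/\<^sup>2\<close>, this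
  is at least \<open>(\<epsilon> - \<epsilon>\<^sup>3\<^sup>/\<^sup>2) v(x\<^sup>j)/a\<^sub>j\<close>, and the expected final value is the sum over the
  rounds of the expected values collected.\<close>

lemma expectation_bind_pmf_finite:
  fixes g :: "'b \<Rightarrow> real"
  assumes "finite (set_pmf p)" "\<And>a. a \<in> set_pmf p \<Longrightarrow> finite (set_pmf (f a))"
  shows "measure_pmf.expectation (bind_pmf p f) g
       = measure_pmf.expectation p (\<lambda>a. measure_pmf.expectation (f a) g)"
  using assms by (simp add: pmf_expectation_bind[of "set_pmf p"] integral_measure_pmf[of "set_pmf p"])

lemma finite_set_replicate_pmf:
  "finite (set_pmf p) \<Longrightarrow> finite (set_pmf (replicate_pmf n p))"
  by (simp add: set_replicate_pmf lists_eq_set finite_lists_length_eq)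

lemma expectation_replicate_pmf_prod_list:
  fixes g :: "'b \<Rightarrow> real"
  assumes "finite (set_pmf p)"
  shows "measure_pmf.expectation (replicate_pmf n p) (\<lambda>xs. prod_list (map g xs))
       = measure_pmf.expectation p g ^ n"
proof (induction n)
  case (Suc n)
  have "measure_pmf.expectation (replicate_pmf (Suc n) p) (\<lambda>xs. prod_list (map g xs))
      = measure_pmf.expectation p (\<lambda>x. g x * measure_pmf.expectation (replicate_pmf n p)
          (\<lambda>xs. prod_list (map g xs)))"
    using assms by (simp add: expectation_bind_pmf_finite finite_set_replicate_pmf)
  then show ?case
    using Suc by simp
qed simp

lemma one_minus_power_ge:
  fixes t :: real
  assumes "0 \<le> t" "t \<le> 1"
  shows "q * t * (1 - q * t) \<le> 1 - (1 - t) ^ q"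
proof -
  define s where "s = q * t"
  have s: "0 \<le> s" using assms by (simp add: s_def)
  have "(1 - t) ^ q \<le> exp (- t) ^ q"
    using assms exp_ge_add_one_self[of "- t"] by (intro power_mono) auto
  also have "\<dots> = exp (- s)"
    by (simp add: s_def exp_of_nat_mult[symmetric])
  also have "\<dots> \<le> 1 / (1 + s)"
    using exp_ge_add_one_self[of s] s by (simp add: exp_minus field_simps)
  finally have "s / (1 + s) \<le> 1 - (1 - t) ^ q"
    using s by (simp add: field_simps)
  moreover have "s * (1 - s) \<le> s / (1 + s)"
    using s by (simp add: field_simps)
  ultimately show ?thesis
    by (simp add: s_def)
qed

lemma finite_confs: "finite I \<Longrightarrow> finite (confs I w k)"
  unfolding confs_def by (rule finite_subset[of _ "Pow I"]) auto

lemma pmf_sample_conf: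
  assumes "finite I" "x \<in> LP_feas I w k S M" "M > 0"
  shows "pmf (sample_conf I w k x) C = (if C \<in> confs I w k then x C / M else 0)"
proof -
  let ?f = "\<lambda>C. if C \<in> confs I w k then x C / fnorm I w k x else 0"
  have x: "frac_sol I w k x" "fnorm I w k x = M"
    using assms(2) unfolding LP_feas_def feasible_def by auto
  have nonneg: "0 \<le> ?f C" for C
    using x assms(3) unfolding frac_sol_def by auto
  have "(\<Sum>C\<in>confs I w k. ?f C) = 1"
    using x assms(3) by (simp add: sum_divide_distrib[symmetric] fnorm_def)
  moreover have "(\<Sum>C\<in>confs I w k. ennreal (?f C)) = ennreal (\<Sum>C\<in>confs I w k. ?f C)"
    using nonneg by (intro sum_ennreal)
  ultimately have "(\<integral>\<^sup>+C. ennreal (?f C) \<partial>count_space UNIV) = 1"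
    using assms(1) by (subst nn_integral_count_space'[of "confs I w k"]) (auto simp: finite_confs)
  then show ?thesis
    using nonneg x unfolding sample_conf_def by (subst pmf_embed_pmf) auto
qed

lemma set_pmf_sample_conf:
  assumes "finite I" "x \<in> LP_feas I w k S M" "M > 0"
  shows "set_pmf (sample_conf I w k x) \<subseteq> confs I w k"
  using pmf_sample_conf[OF assms] by (auto simp: set_pmf_eq)

lemma finite_set_pmf_sample_conf:
  assumes "finite I" "x \<in> LP_feas I w k S M" "M > 0"
  shows "finite (set_pmf (sample_conf I w k x))"
  using set_pmf_sample_conf[OF assms] finite_confs[OF assms(1)] finite_subset by blast

lemma prob_sample_conf_contains:
  assumes "finite I" "x \<in> LP_feas I w k S M" "M > 0"
  shows "measure_pmf.expectation (sample_conf I w k x) (\<lambda>C. of_bool (i \<in> C)) = cover I w k x i / M"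
proof -
  have "measure_pmf.expectation (sample_conf I w k x) (\<lambda>C. of_bool (i \<in> C))
      = (\<Sum>C\<in>confs I w k. of_bool (i \<in> C) * pmf (sample_conf I w k x) C)"
    using assms set_pmf_sample_conf[OF assms]
    by (intro integral_measure_pmf_real) (auto simp: finite_confs)
  also have "\<dots> = (\<Sum>C\<in>{C\<in>confs I w k. i \<in> C}. x C) / M"
    using assms
    by (auto simp: pmf_sample_conf sum.inter_filter finite_confs sum_divide_distrib intro!: sum.cong)
  finally show ?thesis
    unfolding cover_def .
qed

lemma cover_bounds:
  assumes "feasible I w k x" "i \<in> I"
  shows "0 \<le> cover I w k x i" "cover I w k x i \<le> 1"
  using assms unfolding feasible_def frac_sol_def cover_def by (auto intro: sum_nonneg)

lemma fval_nonneg: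
  assumes "feasible I w k x" "\<forall>i\<in>I. 0 \<le> v i"
  shows "0 \<le> fval I w v k x"
  unfolding fval_def using assms cover_bounds(1)[OF assms(1)] by (auto intro!: sum_nonneg)

lemma fval_eq_sum_restrict:
  assumes "finite I" "S \<subseteq> I" "x \<in> LP_feas I w k S M"
  shows "fval I w v k x = (\<Sum>i\<in>S. cover I w k x i * v i)"
proof -
  have "cover I w k x i = 0" if "i \<notin> S" for i
    unfolding cover_def using assms(3) that unfolding LP_feas_def by (intro sum.neutral) auto
  then show ?thesis
    unfolding fval_def using assms(1,2) by (intro sum.mono_neutral_right) auto
qed

lemma expectation_round_gain:
  assumes "finite I" "S \<subseteq> I" "x \<in> LP_feas I w k S M" "M > 0"
  shows "measure_pmf.expectation (replicate_pmf q (sample_conf I w k x)) (\<lambda>Rs. sum v (S \<inter> \<Union>(set Rs)))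
       = (\<Sum>i\<in>S. v i * (1 - (1 - cover I w k x i / M) ^ q))"
proof -
  let ?D = "sample_conf I w k x"
  let ?missed = "\<lambda>i Rs. prod_list (map (\<lambda>R. of_bool (i \<notin> R) :: real) Rs)"
  have fin: "finite (set_pmf ?D)" "finite (set_pmf (replicate_pmf q ?D))"
    using finite_set_pmf_sample_conf[OF assms(1,3,4)] by (auto intro: finite_set_replicate_pmf)
  have missed: "?missed i Rs = of_bool (\<forall>R\<in>set Rs. i \<notin> R)" for i Rs
    by (induction Rs) auto
  have "finite S"
    using assms(1,2) finite_subset by blast
  then have "sum v (S \<inter> \<Union>(set Rs)) = (\<Sum>i\<in>S. v i * (1 - ?missed i Rs))" for Rs
    unfolding missed by (auto simp: sum.inter_restrict intro!: sum.cong)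
  moreover have "measure_pmf.expectation ?D (\<lambda>R. of_bool (i \<notin> R)) = 1 - cover I w k x i / M" for i
    using prob_sample_conf_contains[OF assms(1,3,4), of i] fin
    by (simp add: of_bool_not_iff Bochner_Integration.integral_diff integrable_measure_pmf_finite)
  ultimately show ?thesis
    using fin by (simp add: Bochner_Integration.integral_sum integrable_measure_pmf_finite
        Bochner_Integration.integral_diff expectation_replicate_pmf_prod_list)
qed

lemma expectation_round_gain_ge:
  assumes "finite I" "\<forall>i\<in>I. 0 \<le> v i" "S \<subseteq> I" "x \<in> LP_feas I w k S M" "1 \<le> M"
  shows "q / M * (1 - q / M) * fval I w v k x
       \<le> measure_pmf.expectation (replicate_pmf q (sample_conf I w k x)) (\<lambda>Rs. sum v (S \<inter> \<Union>(set Rs)))"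
proof -
  have coordinate: "q / M * (1 - q / M) * cover I w k x i \<le> 1 - (1 - cover I w k x i / M) ^ q"
    if "i \<in> I" for i
  proof -
    let ?t = "cover I w k x i / M"
    have c: "0 \<le> cover I w k x i" "cover I w k x i \<le> 1"
      using cover_bounds[of I w k x i] assms(4) that by (auto simp: LP_feas_def)
    then have "0 \<le> ?t" "?t \<le> 1" "q * ?t \<le> q / M"
      using assms(5) by (auto intro!: divide_right_mono mult_left_le)
    have "q / M * (1 - q / M) * cover I w k x i = q * ?t * (1 - q / M)"
      by simp
    also have "\<dots> \<le> q * ?t * (1 - q * ?t)"
      using c assms(5) \<open>q * ?t \<le> q / M\<close> by (intro mult_left_mono) auto
    also have "\<dots> \<le> 1 - (1 - ?t) ^ q"
      using \<open>0 \<le> ?t\<close> \<open>?t \<le> 1\<close> by (rule one_minus_power_ge)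
    finally show ?thesis .
  qed
  have "q / M * (1 - q / M) * fval I w v k x = (\<Sum>i\<in>S. v i * (q / M * (1 - q / M) * cover I w k x i))"
    by (simp add: fval_eq_sum_restrict[OF assms(1,3,4)] sum_distrib_left mult_ac)
  also have "\<dots> \<le> (\<Sum>i\<in>S. v i * (1 - (1 - cover I w k x i / M) ^ q))"
    using assms(2,3) coordinate by (intro sum_mono mult_left_mono) auto
  also have "\<dots> = measure_pmf.expectation (replicate_pmf q (sample_conf I w k x))
      (\<lambda>Rs. sum v (S \<inter> \<Union>(set Rs)))"
    using assms by (simp add: expectation_round_gain)
  finally show ?thesis .
qed

lemma length_irr_run: "h \<in> set_pmf (irr_run I w k q sel n) \<Longrightarrow> length h = n"
  by (induction n arbitrary: h) (auto simp: set_replicate_pmf)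

lemma map_pmf_take_irr_run:
  "j \<le> n \<Longrightarrow> map_pmf (take j) (irr_run I w k q sel n) = irr_run I w k q sel j"
proof (induction n)
  case (Suc n)
  show ?case
  proof (cases "j = Suc n")
    case True
    then have "map_pmf (take j) (irr_run I w k q sel (Suc n)) = map_pmf id (irr_run I w k q sel (Suc n))"
      by (intro map_pmf_cong) (auto dest: length_irr_run)
    then show ?thesis
      using True by simp
  next
    case False
    then have "j \<le> n"
      using Suc.prems by simp
    then have "map_pmf (take j) (irr_run I w k q sel (Suc n))
        = bind_pmf (irr_run I w k q sel n) (\<lambda>h. return_pmf (take j h))"
      unfolding irr_run.simps map_bind_pmf map_pmf_comp
      by (intro bind_pmf_cong) (auto dest: length_irr_run)
    then show ?thesis
      using Suc.IH[OF \<open>j \<le> n\<close>] by (simp add: map_pmf_def)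
  qed
qed simp

lemma finite_set_pmf_irr_run:
  assumes "\<forall>j\<in>{1..n}. \<forall>h. length h = j - 1 \<longrightarrow> finite (set_pmf (sample_conf I w k (sel j h)))"
  shows "finite (set_pmf (irr_run I w k q sel n))"
  using assms
proof (induction n)
  case (Suc n)
  then show ?case
    by (auto simp: set_bind_pmf intro!: finite_imageI finite_set_replicate_pmf dest: length_irr_run)
qed simp

lemma covered_value_append:
  assumes "finite I"
  shows "sum v (I - remaining I (h @ [Rs]))
       = sum v (I - remaining I h) + sum v (remaining I h \<inter> \<Union>(set Rs))"
proof -
  have "I - remaining I (h @ [Rs]) = (I - remaining I h) \<union> (remaining I h \<inter> \<Union>(set Rs))"
    unfolding remaining_def by auto
  then show ?thesis
    using assms by (simp only:) (rule sum.union_disjoint, auto simp: remaining_def)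
qed

lemma expectation_covered_value_irr_run:
  fixes v :: "'a \<Rightarrow> real"
  assumes "finite I"
    and "\<forall>j\<in>{1..n}. \<forall>h. length h = j - 1 \<longrightarrow> finite (set_pmf (sample_conf I w k (sel j h)))"
  shows "measure_pmf.expectation (irr_run I w k q sel n) (\<lambda>h. sum v (I - remaining I h))
       = (\<Sum>j=1..n. measure_pmf.expectation (irr_run I w k q sel (j - 1)) (\<lambda>h.
            measure_pmf.expectation (replicate_pmf q (sample_conf I w k (sel j h)))
              (\<lambda>Rs. sum v (remaining I h \<inter> \<Union>(set Rs)))))"
  using assms(2)
proof (induction n)
  case 0
  show ?case
    by (simp add: remaining_def)
next
  case (Suc n)
  let ?run = "irr_run I w k q sel n"
  let ?R = "\<lambda>h. replicate_pmf q (sample_conf I w k (sel (Suc n) h))"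
  let ?gain = "\<lambda>h. measure_pmf.expectation (?R h) (\<lambda>Rs. sum v (remaining I h \<inter> \<Union>(set Rs)))"
  have fin_run: "finite (set_pmf ?run)"
    using Suc.prems by (intro finite_set_pmf_irr_run) auto
  have fin_R: "finite (set_pmf (?R h))" if "h \<in> set_pmf ?run" for h
    using Suc.prems length_irr_run[OF that] by (intro finite_set_replicate_pmf) auto
  have "measure_pmf.expectation (irr_run I w k q sel (Suc n)) (\<lambda>h. sum v (I - remaining I h))
      = measure_pmf.expectation ?run (\<lambda>h. measure_pmf.expectation (?R h)
          (\<lambda>Rs. sum v (I - remaining I (h @ [Rs]))))"
    using fin_run fin_R by (simp add: expectation_bind_pmf_finite)
  also have "\<dots> = measure_pmf.expectation ?run (\<lambda>h. sum v (I - remaining I h) + ?gain h)"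
    using fin_R by (intro integral_cong_AE)
      (auto simp: AE_measure_pmf_iff covered_value_append[OF assms(1)] integrable_measure_pmf_finite)
  also have "\<dots> = measure_pmf.expectation ?run (\<lambda>h. sum v (I - remaining I h))
      + measure_pmf.expectation ?run ?gain"
    using fin_run by (simp add: integrable_measure_pmf_finite)
  finally show ?case
    using Suc by simp
qed

lemma expectation_covered_value_irr_run_ge:
  fixes v :: "'a \<Rightarrow> real" and M :: "nat \<Rightarrow> real"
  assumes "finite I" "\<forall>i\<in>I. 0 \<le> v i"
    and sel: "\<forall>j\<in>{1..n}. \<forall>h. length h = j - 1 \<longrightarrow> sel j h \<in> LP_feas I w k (remaining I h) (M j)"
    and M: "\<forall>j\<in>{1..n}. 1 \<le> M j" and "J \<le> n"
  shows "(\<Sum>j=1..J. q / M j * (1 - q / M j) *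
            measure_pmf.expectation (irr_run I w k q sel n) (\<lambda>h. fval I w v k (sel j (take (j - 1) h))))
       \<le> measure_pmf.expectation (irr_run I w k q sel n) (\<lambda>h. sum v (I - remaining I h))"
proof -
  let ?run = "irr_run I w k q sel"
  let ?gain = "\<lambda>j h. measure_pmf.expectation (replicate_pmf q (sample_conf I w k (sel j h)))
                 (\<lambda>Rs. sum v (remaining I h \<inter> \<Union>(set Rs)))"
  have fin_sample: "\<forall>j\<in>{1..n}. \<forall>h. length h = j - 1 \<longrightarrow> finite (set_pmf (sample_conf I w k (sel j h)))"
    using sel M by (force intro: finite_set_pmf_sample_conf[OF assms(1)])
  have remaining_subset: "remaining I h \<subseteq> I" for h
    by (auto simp: remaining_def)
  have gain_ge: "q / M j * (1 - q / M j) * measure_pmf.expectation (?run (j - 1)) (\<lambda>h. fval I w v k (sel j h))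
      \<le> measure_pmf.expectation (?run (j - 1)) (?gain j)" if "j \<in> {1..n}" for j
  proof -
    have "finite (set_pmf (?run (j - 1)))"
      using fin_sample that by (intro finite_set_pmf_irr_run) auto
    moreover have "q / M j * (1 - q / M j) * fval I w v k (sel j h) \<le> ?gain j h"
      if "h \<in> set_pmf (?run (j - 1))" for h
      using sel M \<open>j \<in> {1..n}\<close> length_irr_run[OF that] remaining_subset
      by (intro expectation_round_gain_ge[OF assms(1,2)]) auto
    ultimately show ?thesis
      by (subst integral_mult_right_zero[symmetric], intro integral_mono_AE)
        (auto simp: AE_measure_pmf_iff integrable_measure_pmf_finite)
  qed
  have gain_nonneg: "0 \<le> measure_pmf.expectation (?run (j - 1)) (?gain j)" for j
    using assms(2) remaining_subset by (fastforce intro!: Bochner_Integration.integral_nonneg sum_nonneg)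
  have prefix: "measure_pmf.expectation (?run n) (\<lambda>h. g (take (j - 1) h))
      = measure_pmf.expectation (?run (j - 1)) g" if "j \<le> n" for j and g :: "'a set list list \<Rightarrow> real"
  proof -
    have "?run (j - 1) = map_pmf (take (j - 1)) (?run n)"
      using that by (simp add: map_pmf_take_irr_run)
    then show ?thesis
      by simp
  qed
  have "(\<Sum>j=1..J. q / M j * (1 - q / M j) *
          measure_pmf.expectation (?run n) (\<lambda>h. fval I w v k (sel j (take (j - 1) h))))
      = (\<Sum>j=1..J. q / M j * (1 - q / M j) *
          measure_pmf.expectation (?run (j - 1)) (\<lambda>h. fval I w v k (sel j h)))"
    using \<open>J \<le> n\<close> by (intro sum.cong refl) (subst prefix, auto)
  also have "\<dots> \<le> (\<Sum>j=1..J. measure_pmf.expectation (?run (j - 1)) (?gain j))"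
    using \<open>J \<le> n\<close> by (intro sum_mono gain_ge) auto
  also have "\<dots> \<le> (\<Sum>j=1..n. measure_pmf.expectation (?run (j - 1)) (?gain j))"
    using \<open>J \<le> n\<close> gain_nonneg by (intro sum_mono2) auto
  also have "\<dots> = measure_pmf.expectation (?run n) (\<lambda>h. sum v (I - remaining I h))"
    using assms(1) fin_sample by (rule expectation_covered_value_irr_run[symmetric])
  finally show ?thesis .
qed

lemma powr_minus_half_eq_nat:
  fixes eps :: real
  assumes "0 < eps" "eps powr (-1/2) = real N"
  shows "sqrt eps = 1 / N" "eps * real N ^ 2 = 1" "nat \<lfloor>1 / eps\<rfloor> = N\<^sup>2" "nat \<lfloor>eps powr (-1/2)\<rfloor> = N"
    "eps powr (3/2) = eps * sqrt eps"
proof -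
  have "eps powr (-1/2) = 1 / sqrt eps"
    using assms(1) by (simp add: powr_minus_divide powr_half_sqrt[symmetric])
  then have "real N * sqrt eps = 1"
    using assms by (simp add: field_simps)
  then show sqrt: "sqrt eps = 1 / N"
    by (cases "N = 0") (simp_all add: eq_divide_eq mult.commute)
  have "eps = (1 / N)\<^sup>2"
    using assms(1) sqrt[symmetric] by simp
  moreover have "N \<noteq> 0"
    using sqrt assms(1) by (cases "N = 0") auto
  ultimately show eps: "eps * real N ^ 2 = 1"
    by (simp add: power_divide)
  then have "1 / eps = real (N\<^sup>2)"
    using assms(1) by (simp add: field_simps)
  then show "nat \<lfloor>1 / eps\<rfloor> = N\<^sup>2"
    by (metis floor_of_nat nat_int)
  show "nat \<lfloor>eps powr (-1/2)\<rfloor> = N"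
    using assms(2) by simp
  have "eps powr (3/2) = eps powr (1 + 1/2)"
    by simp
  then show "eps powr (3/2) = eps * sqrt eps"
    using assms(1) by (simp only: powr_add) (simp add: powr_half_sqrt)
qed

lemma one_minus_steps_ge:
  fixes eps :: real
  assumes "eps * real N ^ 2 = 1"
  shows "j \<le> N\<^sup>2 \<Longrightarrow> eps \<le> 1 - (real j - 1) * eps"
    and "j \<le> N\<^sup>2 - N \<Longrightarrow> 1 / N \<le> 1 - (real j - 1) * eps"
proof -
  have "N > 0"
    using assms by (intro Nat.gr0I) auto
  have "0 < eps * real N ^ 2"
    using assms by simp
  then have "eps > 0"
    by (simp add: zero_less_mult_iff)
  show "eps \<le> 1 - (real j - 1) * eps" if "j \<le> N\<^sup>2"
  proof -
    have "(real j - 1) * eps \<le> (real N ^ 2 - 1) * eps"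
      using that \<open>eps > 0\<close> by (intro mult_right_mono) (auto simp flip: of_nat_power)
    then show ?thesis
      using assms by (simp add: algebra_simps)
  qed
  show "1 / N \<le> 1 - (real j - 1) * eps" if "j \<le> N\<^sup>2 - N"
  proof -
    have "N \<le> N\<^sup>2"
      by (simp add: power2_eq_square)
    then have "real j \<le> real N ^ 2 - real N"
      using that by (metis of_nat_diff of_nat_le_iff of_nat_power)
    then have "(real j - 1) * eps \<le> (real N ^ 2 - real N - 1) * eps"
      using \<open>eps > 0\<close> by (intro mult_right_mono) auto
    moreover have "real N * eps = 1 / N"
      using assms \<open>N > 0\<close> by (simp add: field_simps power2_eq_square)
    ultimately show ?thesis
      using assms \<open>eps > 0\<close> by (simp add: algebra_simps)
  qed
qed

lemma coverage_coefficient_ge: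
  fixes e a :: real
  assumes "0 < e" "sqrt e \<le> a"
  shows "(e - e * sqrt e) / a \<le> e / a * (1 - e / a)"
proof -
  have "0 < sqrt e"
    using assms(1) by simp
  then have "0 < a"
    using assms(2) by linarith
  have "e = sqrt e * sqrt e"
    using assms by simp
  also have "\<dots> \<le> sqrt e * a"
    using assms \<open>0 < sqrt e\<close> by (intro mult_left_mono) auto
  finally have "e / a \<le> sqrt e"
    using \<open>0 < a\<close> by (simp add: divide_le_eq mult.commute)
  have "(e - e * sqrt e) / a = e / a * (1 - sqrt e)"
    by (simp add: algebra_simps diff_divide_distrib)
  also have "\<dots> \<le> e / a * (1 - e / a)"
    using assms \<open>0 < a\<close> \<open>e / a \<le> sqrt e\<close> by (intro mult_left_mono) auto
  finally show ?thesis .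
qed

lemma round_weight_bounds:
  fixes eps :: real and j :: nat
  assumes "eps * real N ^ 2 = 1" "sqrt eps = 1 / N" "eps * real m = real q" "0 < m"
  defines "a \<equiv> 1 - (real j - 1) * eps"
  shows "j \<le> N\<^sup>2 \<Longrightarrow> 1 \<le> real m * a"
    and "j \<le> N\<^sup>2 - N \<Longrightarrow> (eps - eps * sqrt eps) / a \<le> q / (m * a) * (1 - q / (m * a))"
proof -
  have "0 < eps * real N ^ 2"
    using assms(1) by simp
  then have "0 < eps"
    by (simp add: zero_less_mult_iff)
  then have "0 < real q"
    using assms(4) by (simp flip: assms(3))
  then have "1 \<le> real q"
    by simp
  show "1 \<le> real m * a" if "j \<le> N\<^sup>2"
  proof -
    have "eps * real m \<le> a * real m"
      using one_minus_steps_ge(1)[OF assms(1) that] by (intro mult_right_mono) (auto simp: a_def)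
    then show ?thesis
      using assms(3) \<open>1 \<le> real q\<close> by (simp add: mult.commute)
  qed
  show "(eps - eps * sqrt eps) / a \<le> q / (m * a) * (1 - q / (m * a))" if "j \<le> N\<^sup>2 - N"
  proof -
    have "q / (m * a) = eps / a"
      using assms(4) by (simp flip: assms(3))
    moreover have "sqrt eps \<le> a"
      using one_minus_steps_ge(2)[OF assms(1) that] assms(2) by (simp add: a_def)
    ultimately show ?thesis
      using coverage_coefficient_ge[OF \<open>0 < eps\<close>] by simp
  qed
qed

theorem lemma3p1:
  fixes I :: "'a set" and w v :: "'a \<Rightarrow> real" and m k :: nat and eps :: real
    and sel :: "nat \<Rightarrow> 'a set list list \<Rightarrow> ('a set \<Rightarrow> real)"
  assumes finI: "finite I"
    and w01: "\<forall>i\<in>I. 0 \<le> w i \<and> w i \<le> 1"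
    and vnn: "\<forall>i\<in>I. 0 \<le> v i"
    and mpos: "m > 0" and kpos: "k > 0"
    and eps: "0 < eps" "eps < 0.1"
    and eps_sqrt_nat: "eps powr (-1/2) \<in> \<nat>"
    and simple: "real m > exp (exp (eps powr (-30)))" "eps * real m \<in> \<nat>"
    and sel: "\<forall>j\<in>{1..nat \<lfloor>1/eps\<rfloor>}. \<forall>h. length h = j - 1 \<longrightarrow>
               approx_LP eps I w v k (remaining I h) (real m * (1 - (real j - 1) * eps)) (sel j h)"
  shows "measure_pmf.expectation (irr_run I w k (nat \<lfloor>eps * real m\<rfloor>) sel (nat \<lfloor>1/eps\<rfloor>))
            (\<lambda>h. sum v (I - remaining I h))
         \<ge> (eps - eps powr (3/2)) *
           (\<Sum>j = 1..nat \<lfloor>1/eps\<rfloor> - nat \<lfloor>eps powr (-1/2)\<rfloor>.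
              measure_pmf.expectation (irr_run I w k (nat \<lfloor>eps * real m\<rfloor>) sel (nat \<lfloor>1/eps\<rfloor>))
                 (\<lambda>h. fval I w v k (sel j (take (j - 1) h)))
              / (1 - (real j - 1) * eps))"
proof -
  obtain N where N: "eps powr (-1/2) = real N"
    using eps_sqrt_nat Nats_cases by blast
  note grid = powr_minus_half_eq_nat[OF eps(1) N]
  obtain q where q: "eps * real m = real q"
    using simple(2) Nats_cases by metis
  define a where "a j = 1 - (real j - 1) * eps" for j :: nat
  note weights = round_weight_bounds[OF grid(2,1) q mpos, folded a_def]
  let ?run = "irr_run I w k q sel (N\<^sup>2)"
  let ?E = "\<lambda>j. measure_pmf.expectation ?run (\<lambda>h. fval I w v k (sel j (take (j - 1) h)))"
  have sel': "\<forall>j\<in>{1..N\<^sup>2}. \<forall>h. length h = j - 1 \<longrightarrow>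
      sel j h \<in> LP_feas I w k (remaining I h) (real m * a j)"
    using sel grid(3) by (auto simp: approx_LP_def a_def)
  have nonneg: "0 \<le> ?E j" if "j \<in> {1..N\<^sup>2}" for j
    using sel' vnn that
    by (intro integral_nonneg_AE)
      (auto simp: AE_measure_pmf_iff LP_feas_def intro!: fval_nonneg dest!: length_irr_run)
  have "(eps - eps powr (3/2)) * (\<Sum>j=1..N\<^sup>2 - N. ?E j / a j)
      = (\<Sum>j=1..N\<^sup>2 - N. (eps - eps powr (3/2)) / a j * ?E j)"
    by (simp add: sum_distrib_left)
  also have "\<dots> \<le> (\<Sum>j=1..N\<^sup>2 - N. real q / (real m * a j) * (1 - real q / (real m * a j)) * ?E j)"
    unfolding grid(5) using weights(2) nonneg by (intro sum_mono mult_right_mono) auto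
  also have "\<dots> \<le> measure_pmf.expectation ?run (\<lambda>h. sum v (I - remaining I h))"
    using weights(1) by (intro expectation_covered_value_irr_run_ge[OF finI vnn sel']) auto
  finally have "(eps - eps powr (3/2)) * (\<Sum>j=1..N\<^sup>2 - N. ?E j / a j)
      \<le> measure_pmf.expectation ?run (\<lambda>h. sum v (I - remaining I h))" .
  then show ?thesis
    using grid q by (simp add: a_def)
qed

end
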